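(* Let $w$ be a decreasing weight on $(0,\infty)$ and $w(\infty):=\lim_{t\to\infty}w(t)$. Then: (i) There exists a weight $v$ such that $\Lambda^1(w)=\Gamma^1(v)$ if and only if $w(\infty)=0$. (ii) $\Lambda^1(w)=L^1$ if and only if $w(\infty)>0$ and $w\in L^\infty$. (iii) There exists a weight $v$ such that $\Lambda^1(w)=\Gamma^1(v)\cap L^1$, $L^1\not\subset\Gamma^1(v)$ and $\Gamma^1(v)\not\subset L^1$ if and only if $w(\infty)>0$ and $w\notin L^\infty$.
   Context: A weight is a nonnegative locally integrable measurable function on $(0,\infty)$; "decreasing" means nonincreasing. For a measurable function $f$ on $\mathbb{R}^n$, $f^*$ is its decreasing rearrangement and $f^{**}(t)=\frac1t\int_0^t f^*(s)\,ds$. $\Lambda^1(w)$ is the set of $f$ with $\|f\|_{\Lambda^1(w)}=\int_0^\infty f^*(t)w(t)\,dt<\infty$; $\Gamma^1(v)$ is the set of $f$ with $\|f\|_{\Gamma^1(v)}=\int_0^\infty f^{**}(t)v(t)\,dt<\infty$; $L^1=L^1(\mathbb{R}^n)$; $\Gamma^1(v)\cap L^1$ carries the norm $\|f\|_{\Gamma^1(v)}+\|f\|_{L^1}$. $X\subset Y$ means there is $C$ with $\|f\|_Y\le C\|f\|_X$ for all $f$; $X=Y$ means both inclusions hold; $X\not\subset Y$ means $X\subset Y$ fails. *)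

theory Defs
  imports "HOL-Analysis.Analysis"
begin

definition weight :: "(real \<Rightarrow> real) \<Rightarrow> bool" where
  "weight w \<longleftrightarrow> set_borel_measurable lborel {0<..} w
     \<and> (\<forall>t>0. 0 \<le> w t)
     \<and> (\<forall>t>0. (\<integral>\<^sup>+ s\<in>{0<..<t}. ennreal (w s) \<partial>lborel) < \<infinity>)"

definition decreasing_pos :: "(real \<Rightarrow> real) \<Rightarrow> bool" where
  "decreasing_pos w \<longleftrightarrow> (\<forall>s t. 0 < s \<longrightarrow> s \<le> t \<longrightarrow> w t \<le> w s)"

definition winf :: "(real \<Rightarrow> real) \<Rightarrow> real" where
  "winf w = Lim at_top w"

definition Linfty_pos :: "(real \<Rightarrow> real) \<Rightarrow> bool" where
  "Linfty_pos w \<longleftrightarrow> (\<exists>C. AE t in lborel. 0 < t \<longrightarrow> \<bar>w t\<bar> \<le> C)"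

definition distrib_fun :: "('a::euclidean_space \<Rightarrow> real) \<Rightarrow> ennreal \<Rightarrow> ennreal" where
  "distrib_fun f s = emeasure lebesgue {x. s < ennreal \<bar>f x\<bar>}"

definition rearr :: "('a::euclidean_space \<Rightarrow> real) \<Rightarrow> real \<Rightarrow> ennreal" where
  "rearr f t = Inf {s. distrib_fun f s \<le> ennreal t}"

definition maxfun :: "('a::euclidean_space \<Rightarrow> real) \<Rightarrow> real \<Rightarrow> ennreal" where
  "maxfun f t = ennreal (1 / t) * (\<integral>\<^sup>+ s\<in>{0<..<t}. rearr f s \<partial>lborel)"

definition lambda_norm :: "(real \<Rightarrow> real) \<Rightarrow> ('a::euclidean_space \<Rightarrow> real) \<Rightarrow> ennreal" where
  "lambda_norm w f = (\<integral>\<^sup>+ t\<in>{0<..}. rearr f t * ennreal (w t) \<partial>lborel)"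

definition gamma_norm :: "(real \<Rightarrow> real) \<Rightarrow> ('a::euclidean_space \<Rightarrow> real) \<Rightarrow> ennreal" where
  "gamma_norm v f = (\<integral>\<^sup>+ t\<in>{0<..}. maxfun f t * ennreal (v t) \<partial>lborel)"

definition L1_norm :: "('a::euclidean_space \<Rightarrow> real) \<Rightarrow> ennreal" where
  "L1_norm f = (\<integral>\<^sup>+ x. ennreal \<bar>f x\<bar> \<partial>lebesgue)"

definition space_incl :: "(('a::euclidean_space \<Rightarrow> real) \<Rightarrow> ennreal) \<Rightarrow> (('a \<Rightarrow> real) \<Rightarrow> ennreal) \<Rightarrow> bool" where
  "space_incl NX NY \<longleftrightarrow> (\<exists>C::real. C > 0 \<and> (\<forall>f \<in> borel_measurable lebesgue. NY f \<le> ennreal C * NX f))"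

definition space_eq :: "(('a::euclidean_space \<Rightarrow> real) \<Rightarrow> ennreal) \<Rightarrow> (('a \<Rightarrow> real) \<Rightarrow> ennreal) \<Rightarrow> bool" where
  "space_eq NX NY \<longleftrightarrow> space_incl NX NY \<and> space_incl NY NX"

end

(*
  Everything rests on the dyadic weight v(t) = w(t) - w(2t). By Fubini,
  ||f||_Gamma(v) = int_0^oo f*(s) V(s) ds with V(s) = int_s^oo v(t)/t dt, and the substitution
  t -> 2t telescopes V(s) into int_s^2s (w(t) - w(oo))/t dt, which lies between
  (w(2s) - w(oo))/2 and w(s) - w(oo). Hence
    ||f||_Gamma(v) <= ||f||_Lambda(w) <= 4 ||f||_Gamma(v) + w(oo) ||f||_1,
  while ||f||_1 = int_0^oo f* gives w(oo) ||f||_1 <= ||f||_Lambda(w) <= ||w||_oo ||f||_1.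
  These estimates give all the "if" directions. The converses are tested on indicators of
  cubes of volume a, whose rearrangement is the indicator of [0, a): their L^1-norm is a,
  their Lambda(w)-norm int_0^a w is at least a w(a) and is o(a) when w(oo) = 0, and their
  Gamma(v)-norm int_0^oo min(1, a/t) v(t) dt is o(a) whenever it is finite.
*)
theory Submission
  imports Defs
begin

section \<open>Decreasing weights\<close>

definition zero_ext :: "(real \<Rightarrow> real) \<Rightarrow> real \<Rightarrow> real" where
  "zero_ext u t = (if 0 < t then u t else 0)"

lemma decreasing_posD: "decreasing_pos w \<Longrightarrow> 0 < s \<Longrightarrow> s \<le> t \<Longrightarrow> w t \<le> w s"
  unfolding decreasing_pos_def by blast

lemma weight_nonneg: "weight w \<Longrightarrow> 0 < t \<Longrightarrow> 0 \<le> w t"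
  unfolding weight_def by auto

lemma weight_nn_integral_Ioo_finite:
  "weight w \<Longrightarrow> 0 < t \<Longrightarrow> (\<integral>\<^sup>+ s\<in>{0<..<t}. ennreal (w s) \<partial>lborel) < \<infinity>"
  unfolding weight_def by auto

lemma weight_zero_ext_measurable:
  assumes "weight w"
  shows "zero_ext w \<in> borel_measurable borel"
proof -
  have "(\<lambda>x. indicator {0<..} x *\<^sub>R w x) \<in> borel_measurable lborel"
    using assms unfolding weight_def set_borel_measurable_def by simp
  moreover have "(\<lambda>x. indicator {0<..} x *\<^sub>R w x) = zero_ext w"
    by (auto simp: zero_ext_def indicator_def)
  ultimately show ?thesis by simp
qed

lemma decreasing_pos_tendsto_Inf:
  fixes w :: "real \<Rightarrow> real"
  assumes dec: "decreasing_pos w" and nonneg: "\<And>t. 0 < t \<Longrightarrow> 0 \<le> w t"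
  shows "(w \<longlongrightarrow> Inf (w ` {0<..})) at_top"
proof (rule order_tendstoI)
  have bdd: "bdd_below (w ` {0<..})"
    using nonneg by (auto intro!: bdd_belowI[of _ 0])
  fix a assume "a < Inf (w ` {0<..})"
  then have "a < w t" if "t \<ge> 1" for t
    using cInf_lower[OF _ bdd, of "w t"] that by fastforce
  then show "eventually (\<lambda>t. a < w t) at_top"
    by (rule eventually_at_top_linorderI)
next
  fix a assume "Inf (w ` {0<..}) < a"
  then obtain t0 where t0: "t0 > 0" "w t0 < a"
    using cInf_lessD[of "w ` {0<..}" a] by auto
  then have "w t < a" if "t \<ge> t0" for t
    using decreasing_posD[OF dec t0(1) that] t0(2) by linarith
  then show "eventually (\<lambda>t. w t < a) at_top"
    by (rule eventually_at_top_linorderI)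
qed

lemma winf_eq_Inf:
  assumes "weight w" and "decreasing_pos w"
  shows "winf w = Inf (w ` {0<..})"
proof -
  have "(w \<longlongrightarrow> Inf (w ` {0<..})) at_top"
    by (rule decreasing_pos_tendsto_Inf) (use assms weight_nonneg in auto)
  then show ?thesis unfolding winf_def by (intro tendsto_Lim) simp_all
qed

lemma tendsto_winf:
  assumes "weight w" and "decreasing_pos w"
  shows "(w \<longlongrightarrow> winf w) at_top"
  using decreasing_pos_tendsto_Inf[of w] weight_nonneg winf_eq_Inf assms by auto

lemma winf_le:
  assumes "weight w" and "decreasing_pos w" and "0 < t"
  shows "winf w \<le> w t"
proof -
  have "Inf (w ` {0<..}) \<le> w t"
    using assms weight_nonneg by (intro cInf_lower) (auto intro!: bdd_belowI[of _ 0])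
  then show ?thesis using winf_eq_Inf[OF assms(1,2)] by simp
qed

lemma winf_nonneg:
  assumes "weight w" and "decreasing_pos w"
  shows "0 \<le> winf w"
proof -
  have "0 \<le> Inf (w ` {0<..})"
    using assms weight_nonneg by (intro cInf_greatest) auto
  then show ?thesis using winf_eq_Inf[OF assms] by simp
qed

lemma Linfty_pos_iff_bounded:
  assumes "weight w" and dec: "decreasing_pos w"
  shows "Linfty_pos w \<longleftrightarrow> (\<exists>B. \<forall>t>0. w t \<le> B)"
proof
  assume "Linfty_pos w"
  then obtain C where "AE t in lborel. 0 < t \<longrightarrow> \<bar>w t\<bar> \<le> C"
    unfolding Linfty_pos_def by blast
  then obtain N where N: "{t. \<not> (0 < t \<longrightarrow> \<bar>w t\<bar> \<le> C)} \<subseteq> N"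
      "emeasure lborel N = 0" "N \<in> sets lborel"
    by (auto elim!: AE_E)
  have "w t \<le> C" if t: "0 < t" for t
  proof (rule ccontr)
    assume "\<not> w t \<le> C"
    have "{0<..<t} \<subseteq> N"
    proof
      fix s assume s: "s \<in> {0<..<t}"
      then have "w t \<le> w s" using decreasing_posD[OF dec, of s t] by simp
      then show "s \<in> N" using N(1) s \<open>\<not> w t \<le> C\<close> by auto
    qed
    then have "emeasure lborel {0<..<t} \<le> emeasure lborel N"
      using N(3) by (intro emeasure_mono)
    then show False using N(2) t by simp
  qed
  then show "\<exists>B. \<forall>t>0. w t \<le> B" by blast
next
  assume "\<exists>B. \<forall>t>0. w t \<le> B"
  then obtain B where "\<forall>t>0. w t \<le> B" by blast
  then have "AE t in lborel. 0 < t \<longrightarrow> \<bar>w t\<bar> \<le> B"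
    using weight_nonneg[OF \<open>weight w\<close>] by (intro AE_I2) auto
  then show "Linfty_pos w" unfolding Linfty_pos_def by blast
qed

definition dyadic_diff :: "(real \<Rightarrow> real) \<Rightarrow> real \<Rightarrow> real" where
  "dyadic_diff w t = w t - w (2 * t)"

lemma weight_dyadic_diff:
  assumes wt: "weight w" and dec: "decreasing_pos w"
  shows "weight (dyadic_diff w)"
  unfolding weight_def set_borel_measurable_def
proof (intro conjI allI impI)
  have [measurable]: "zero_ext w \<in> borel_measurable borel"
    by (rule weight_zero_ext_measurable[OF wt])
  have "(\<lambda>x. indicator {0<..} x *\<^sub>R dyadic_diff w x) = (\<lambda>x. zero_ext w x - zero_ext w (2 * x))"
    by (auto simp: zero_ext_def dyadic_diff_def indicator_def)
  then show "(\<lambda>x. indicator {0<..} x *\<^sub>R dyadic_diff w x) \<in> borel_measurable lborel"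
    by simp
next
  fix t :: real assume "0 < t"
  then show "0 \<le> dyadic_diff w t"
    using decreasing_posD[OF dec \<open>0 < t\<close>, of "2 * t"] unfolding dyadic_diff_def by simp
  have "(\<integral>\<^sup>+ s\<in>{0<..<t}. ennreal (dyadic_diff w s) \<partial>lborel) \<le> (\<integral>\<^sup>+ s\<in>{0<..<t}. ennreal (w s) \<partial>lborel)"
    using weight_nonneg[OF wt]
    by (intro nn_integral_mono) (auto simp: dyadic_diff_def indicator_def intro: ennreal_leI)
  then show "(\<integral>\<^sup>+ s\<in>{0<..<t}. ennreal (dyadic_diff w s) \<partial>lborel) < \<infinity>"
    using weight_nn_integral_Ioo_finite[OF wt \<open>0 < t\<close>] by (rule le_less_trans)
qed

section \<open>The decreasing rearrangement\<close>

lemma rearr_antimono: "s \<le> t \<Longrightarrow> rearr f t \<le> rearr f s"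
  unfolding rearr_def by (rule Inf_superset_mono) (auto intro: order_trans ennreal_leI)

lemma borel_measurable_antimono_ennreal:
  fixes g :: "real \<Rightarrow> ennreal"
  assumes "\<And>s t. s \<le> t \<Longrightarrow> g t \<le> g s"
  shows "g \<in> borel_measurable borel"
proof (rule borel_measurableI_greater)
  fix y
  have "is_interval {x. y < g x}"
    unfolding is_interval_1 using assms by (auto intro: less_le_trans)
  then show "{x \<in> space borel. y < g x} \<in> sets borel"
    using real_interval_borel_measurable by simp
qed

lemma rearr_borel_measurable[measurable]: "rearr f \<in> borel_measurable borel"
  by (rule borel_measurable_antimono_ennreal) (rule rearr_antimono)

lemma distrib_fun_antimono:
  fixes f :: "'a::euclidean_space \<Rightarrow> real"
  assumes [measurable]: "f \<in> borel_measurable lebesgue" and "s \<le> s'"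
  shows "distrib_fun f s' \<le> distrib_fun f s"
proof -
  have "{x\<in>space lebesgue. s < ennreal \<bar>f x\<bar>} \<in> sets lebesgue" by measurable
  then show ?thesis
    unfolding distrib_fun_def using \<open>s \<le> s'\<close>
    by (intro emeasure_mono) (auto intro: le_less_trans)
qed

lemma distrib_fun_ennreal:
  "0 \<le> c \<Longrightarrow> distrib_fun f (ennreal c) = emeasure lebesgue {x. c < \<bar>f x\<bar>}"
  unfolding distrib_fun_def by (simp add: ennreal_less_iff)

lemma distrib_fun_right_continuous:
  fixes f :: "'a::euclidean_space \<Rightarrow> real"
  assumes [measurable]: "f \<in> borel_measurable lebesgue" and r: "0 \<le> r"
  shows "distrib_fun f (ennreal r) = (SUP n. distrib_fun f (ennreal (r + 1 / Suc n)))"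
proof -
  define A where "A n = {x. r + 1 / Suc n < \<bar>f x\<bar>}" for n :: nat
  have "{x\<in>space lebesgue. c < \<bar>f x\<bar>} \<in> sets lebesgue" for c by measurable
  then have "range A \<subseteq> sets lebesgue" unfolding A_def by auto
  moreover have "incseq A"
  proof (rule incseq_SucI)
    fix n
    have "1 / real (Suc (Suc n)) \<le> 1 / real (Suc n)" by (rule divide_left_mono) auto
    then show "A n \<subseteq> A (Suc n)" unfolding A_def by auto
  qed
  ultimately have "(SUP n. emeasure lebesgue (A n)) = emeasure lebesgue (\<Union>n. A n)"
    by (rule SUP_emeasure_incseq)
  also have "(\<Union>n. A n) = {x. r < \<bar>f x\<bar>}"
  proof safe
    fix x n assume "x \<in> A n"
    then have "r + 1 / Suc n < \<bar>f x\<bar>" by (simp add: A_def)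
    moreover have "0 < 1 / real (Suc n)" by simp
    ultimately show "r < \<bar>f x\<bar>" by linarith
  next
    fix x assume "r < \<bar>f x\<bar>"
    then obtain n where "1 / Suc n < \<bar>f x\<bar> - r"
      using nat_approx_posE[of "\<bar>f x\<bar> - r"] by auto
    then show "x \<in> (\<Union>n. A n)" unfolding A_def by (intro UN_I[of n]) auto
  qed
  also have "(SUP n. emeasure lebesgue (A n)) = (SUP n. distrib_fun f (ennreal (r + 1 / Suc n)))"
    unfolding A_def using r by (intro SUP_cong refl distrib_fun_ennreal[symmetric]) simp
  finally show ?thesis using distrib_fun_ennreal[OF r] by simp
qed

text \<open>Right-continuity of the distribution function makes both inequalities strict.\<close>
lemma less_rearr_iff:
  fixes f :: "'a::euclidean_space \<Rightarrow> real"
  assumes f: "f \<in> borel_measurable lebesgue" and r: "0 \<le> r"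
  shows "ennreal r < rearr f t \<longleftrightarrow> ennreal t < distrib_fun f (ennreal r)"
proof
  assume "ennreal r < rearr f t"
  then show "ennreal t < distrib_fun f (ennreal r)"
    unfolding rearr_def using Inf_lower[of "ennreal r" "{s. distrib_fun f s \<le> ennreal t}"]
    by (auto simp: not_less[symmetric])
next
  assume "ennreal t < distrib_fun f (ennreal r)"
  then obtain n where n: "ennreal t < distrib_fun f (ennreal (r + 1 / Suc n))"
    by (auto simp: distrib_fun_right_continuous[OF f r] less_SUP_iff)
  have "ennreal (r + 1 / Suc n) \<le> rearr f t"
    unfolding rearr_def
  proof (rule Inf_greatest, rule ccontr)
    fix \<sigma> assume "\<sigma> \<in> {s. distrib_fun f s \<le> ennreal t}" "\<not> ennreal (r + 1 / Suc n) \<le> \<sigma>"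
    then have "distrib_fun f (ennreal (r + 1 / Suc n)) \<le> distrib_fun f \<sigma>"
      by (intro distrib_fun_antimono[OF f]) simp
    also have "\<dots> \<le> ennreal t" using \<open>\<sigma> \<in> _\<close> by simp
    finally show False using n by simp
  qed
  moreover have "ennreal r < ennreal (r + 1 / Suc n)"
    using r by (simp add: ennreal_lessI)
  ultimately show "ennreal r < rearr f t" by (meson less_le_trans)
qed

lemma emeasure_lborel_Ioi: "emeasure lborel {(a::real)<..} = \<infinity>"
proof (rule ccontr)
  assume "emeasure lborel {a<..} \<noteq> \<infinity>"
  then obtain r where r: "emeasure lborel {a<..} = ennreal r" "0 \<le> r"
    by (cases "emeasure lborel {a<..}") auto
  have "ennreal (r + 1) = emeasure lborel {a<..<a + (r + 1)}" using r by simp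
  also have "\<dots> \<le> emeasure lborel {a<..}" by (rule emeasure_mono) auto
  finally show False using r by simp
qed

lemma emeasure_lborel_pos_below: "emeasure lborel {t::real. 0 < t \<and> ennreal t < m} = m"
proof (cases m)
  case (real r)
  then have "{t::real. 0 < t \<and> ennreal t < m} = {0<..<r}"
    by (auto simp: ennreal_less_iff)
  then show ?thesis using real by simp
next
  case top
  then have "{t::real. 0 < t \<and> ennreal t < m} = {0<..}" by auto
  then show ?thesis using top by (simp add: emeasure_lborel_Ioi)
qed

lemma sigma_finite_lebesgue: "sigma_finite_measure (lebesgue :: 'a::euclidean_space measure)"
  unfolding sigma_finite_measure_def
proof (intro exI[of _ "range (\<lambda>n::nat. cball (0::'a) (real n))"] conjI)
  show "\<Union> (range (\<lambda>n::nat. cball (0::'a) (real n))) = space lebesgue"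
    by (auto simp: real_arch_simple)
  show "\<forall>a\<in>range (\<lambda>n::nat. cball (0::'a) (real n)). emeasure lebesgue a \<noteq> \<infinity>"
    using emeasure_lborel_cball_finite by (auto simp: less_top)
qed auto

lemma nn_integral_layer_cake:
  fixes g :: "'a \<Rightarrow> ennreal"
  assumes "sigma_finite_measure M" and g[measurable]: "g \<in> borel_measurable M"
  shows "(\<integral>\<^sup>+x. g x \<partial>M) = (\<integral>\<^sup>+s\<in>{0<..}. emeasure M {x\<in>space M. ennreal s < g x} \<partial>lborel)"
proof -
  interpret M: sigma_finite_measure M by fact
  interpret pair_sigma_finite M lborel ..
  define F :: "'a \<Rightarrow> real \<Rightarrow> ennreal"
    where "F x s = indicator {s. 0 < s \<and> ennreal s < g x} s" for x s
  have F_measurable: "case_prod F \<in> borel_measurable (M \<Otimes>\<^sub>M lborel)"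
    unfolding F_def indicator_def by measurable
  have "g x = (\<integral>\<^sup>+s. F x s \<partial>lborel)" for x
  proof -
    have "{s\<in>space lborel. 0 < s \<and> ennreal s < g x} \<in> sets lborel" by measurable
    then show ?thesis
      unfolding F_def by (simp add: emeasure_lborel_pos_below)
  qed
  moreover have "(\<integral>\<^sup>+x. F x s \<partial>M) = emeasure M {x\<in>space M. ennreal s < g x} * indicator {0<..} s"
    for s
  proof -
    have "(\<integral>\<^sup>+x. F x s \<partial>M) = (\<integral>\<^sup>+x. indicator {0<..} s * indicator {x\<in>space M. ennreal s < g x} x \<partial>M)"
      unfolding F_def by (intro nn_integral_cong) (simp add: indicator_def)
    also have "\<dots> = indicator {0<..} s * emeasure M {x\<in>space M. ennreal s < g x}"
      by (rule nn_integral_cmult_indicator) measurable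
    finally show ?thesis by (simp add: mult.commute)
  qed
  ultimately show ?thesis
    using Fubini'[OF F_measurable] by simp
qed

text \<open>Both sides are layer-cake integrals of the same distribution function.\<close>
lemma L1_norm_eq_nn_integral_rearr:
  fixes f :: "'a::euclidean_space \<Rightarrow> real"
  assumes f[measurable]: "f \<in> borel_measurable lebesgue"
  shows "L1_norm f = (\<integral>\<^sup>+t\<in>{0<..}. rearr f t \<partial>lborel)"
proof -
  have "(\<integral>\<^sup>+t\<in>{0<..}. rearr f t \<partial>lborel)
      = (\<integral>\<^sup>+s\<in>{0<..}. emeasure lborel {t. ennreal s < rearr f t * indicator {0<..} t} \<partial>lborel)"
    by (subst nn_integral_layer_cake[OF sigma_finite_lborel]) simp_all
  also have "\<dots> = (\<integral>\<^sup>+s\<in>{0<..}. distrib_fun f (ennreal s) \<partial>lborel)"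
  proof (intro nn_integral_cong)
    fix s :: real
    have "0 < s \<Longrightarrow> {t. ennreal s < rearr f t * indicator {0<..} t}
        = {t. 0 < t \<and> ennreal t < distrib_fun f (ennreal s)}"
      using less_rearr_iff[OF f, of s] by (auto simp: indicator_def)
    then show "emeasure lborel {t. ennreal s < rearr f t * indicator {0<..} t} * indicator {0<..} s
        = distrib_fun f (ennreal s) * indicator {0<..} s"
      by (simp add: emeasure_lborel_pos_below indicator_def)
  qed
  also have "\<dots> = L1_norm f"
    unfolding L1_norm_def distrib_fun_def
    by (subst nn_integral_layer_cake[OF sigma_finite_lebesgue]) simp_all
  finally show ?thesis ..
qed

section \<open>A dyadic tail integral\<close>

lemma nn_integral_Ioi_eq_SUP:
  fixes g :: "real \<Rightarrow> ennreal"
  assumes [measurable]: "g \<in> borel_measurable borel"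
  shows "(\<integral>\<^sup>+t\<in>{s<..}. g t \<partial>lborel) = (SUP n. \<integral>\<^sup>+t\<in>{s<..real n}. g t \<partial>lborel)"
proof -
  have "incseq (\<lambda>n t. g t * indicator {s<..real n} t)"
    by (intro incseq_SucI le_funI) (auto simp: indicator_def)
  then have "(SUP n. \<integral>\<^sup>+t\<in>{s<..real n}. g t \<partial>lborel) = (\<integral>\<^sup>+t. (SUP n. g t * indicator {s<..real n} t) \<partial>lborel)"
    by (intro nn_integral_monotone_convergence_SUP[symmetric]) simp_all
  also have "\<dots> = (\<integral>\<^sup>+t\<in>{s<..}. g t \<partial>lborel)"
  proof (intro nn_integral_cong)
    fix t :: real
    obtain N :: nat where N: "t \<le> real N" using real_arch_simple by blast
    have "g t * indicator {s<..} t \<le> (SUP n. g t * indicator {s<..real n} t)"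
      using N by (intro SUP_upper2[of N]) (auto simp: indicator_def)
    moreover have "(SUP n. g t * indicator {s<..real n} t) \<le> g t * indicator {s<..} t"
      by (intro SUP_least) (auto simp: indicator_def)
    ultimately show "(SUP n. g t * indicator {s<..real n} t) = g t * indicator {s<..} t"
      by (rule antisym[rotated])
  qed
  finally show ?thesis ..
qed

lemma nn_integral_Ioc_decreasing_div_bounds:
  fixes u :: "real \<Rightarrow> real"
  assumes nonneg: "\<And>t. 0 < t \<Longrightarrow> 0 \<le> u t" and dec: "decreasing_pos u" and "0 < a" "a \<le> b"
  shows "ennreal (u b / b * (b - a)) \<le> (\<integral>\<^sup>+t\<in>{a<..b}. ennreal (u t / t) \<partial>lborel)"
    and "(\<integral>\<^sup>+t\<in>{a<..b}. ennreal (u t / t) \<partial>lborel) \<le> ennreal (u a / a * (b - a))"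
proof -
  have const: "(\<integral>\<^sup>+t\<in>{a<..b}. ennreal c \<partial>lborel) = ennreal (c * (b - a))" if "0 \<le> c" for c
    using that \<open>a \<le> b\<close> by (simp add: nn_integral_cmult_indicator ennreal_mult)
  have "u b / b \<le> u t / t" "u t / t \<le> u a / a" if "t \<in> {a<..b}" for t
    using that \<open>0 < a\<close> nonneg[of t] nonneg[of b] nonneg[of a] dec
    unfolding decreasing_pos_def by (auto intro!: frac_le)
  then have "(\<integral>\<^sup>+t\<in>{a<..b}. ennreal (u b / b) \<partial>lborel) \<le> (\<integral>\<^sup>+t\<in>{a<..b}. ennreal (u t / t) \<partial>lborel)"
    and "(\<integral>\<^sup>+t\<in>{a<..b}. ennreal (u t / t) \<partial>lborel) \<le> (\<integral>\<^sup>+t\<in>{a<..b}. ennreal (u a / a) \<partial>lborel)"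
    by (auto intro!: nn_integral_mono ennreal_leI simp: indicator_def)
  moreover have "0 \<le> u b / b" "0 \<le> u a / a"
    using nonneg[of a] nonneg[of b] \<open>0 < a\<close> \<open>a \<le> b\<close> by auto
  ultimately show "ennreal (u b / b * (b - a)) \<le> (\<integral>\<^sup>+t\<in>{a<..b}. ennreal (u t / t) \<partial>lborel)"
    and "(\<integral>\<^sup>+t\<in>{a<..b}. ennreal (u t / t) \<partial>lborel) \<le> ennreal (u a / a * (b - a))"
    by (simp_all add: const)
qed

lemma nn_integral_Ioc_dilation:
  fixes u :: "real \<Rightarrow> real"
  assumes [measurable]: "u \<in> borel_measurable borel" and c: "0 < c"
  shows "(\<integral>\<^sup>+t\<in>{a<..b}. ennreal (u (c * t) / t) \<partial>lborel)
    = (\<integral>\<^sup>+t\<in>{c * a<..c * b}. ennreal (u t / t) \<partial>lborel)"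
proof -
  have "(\<integral>\<^sup>+t\<in>{c * a<..c * b}. ennreal (u t / t) \<partial>lborel)
      = ennreal c * (\<integral>\<^sup>+t. ennreal (u (c * t) / (c * t)) * indicator {c * a<..c * b} (c * t) \<partial>lborel)"
    using nn_integral_real_affine[where f = "\<lambda>t. ennreal (u t / t) * indicator {c * a<..c * b} t"
        and c = c and t = 0] c
    by simp
  also have "\<dots> = (\<integral>\<^sup>+t. ennreal c * (ennreal (u (c * t) / (c * t)) * indicator {a<..b} t) \<partial>lborel)"
    using c by (subst nn_integral_cmult[symmetric]) (auto intro!: nn_integral_cong simp: indicator_def)
  also have "\<dots> = (\<integral>\<^sup>+t\<in>{a<..b}. ennreal (u (c * t) / t) \<partial>lborel)"
  proof (intro nn_integral_cong)
    fix t :: real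
    have "ennreal c * ennreal (u (c * t) / (c * t)) = ennreal (c * (u (c * t) / (c * t)))"
      by (rule ennreal_mult'[symmetric]) (use c in simp)
    also have "c * (u (c * t) / (c * t)) = u (c * t) / t"
      using c by simp
    finally show "ennreal c * (ennreal (u (c * t) / (c * t)) * indicator {a<..b} t)
        = ennreal (u (c * t) / t) * indicator {a<..b} t"
      by (simp add: mult.assoc[symmetric])
  qed
  finally show ?thesis ..
qed

lemma nn_integral_Ioc_split:
  fixes g :: "real \<Rightarrow> ennreal"
  assumes [measurable]: "g \<in> borel_measurable borel" and "a \<le> b" "b \<le> c"
  shows "(\<integral>\<^sup>+t\<in>{a<..c}. g t \<partial>lborel) = (\<integral>\<^sup>+t\<in>{a<..b}. g t \<partial>lborel) + (\<integral>\<^sup>+t\<in>{b<..c}. g t \<partial>lborel)"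
proof -
  have "(\<integral>\<^sup>+t\<in>{a<..c}. g t \<partial>lborel) = (\<integral>\<^sup>+t. g t * indicator {a<..b} t + g t * indicator {b<..c} t \<partial>lborel)"
    using assms(2,3) by (intro nn_integral_cong) (auto simp: indicator_def)
  also have "\<dots> = (\<integral>\<^sup>+t\<in>{a<..b}. g t \<partial>lborel) + (\<integral>\<^sup>+t\<in>{b<..c}. g t \<partial>lborel)"
    by (rule nn_integral_add) measurable
  finally show ?thesis .
qed

text \<open>Substituting \<open>t \<mapsto> 2t\<close> turns the integral of \<open>u(2t)/t\<close> over \<open>(s, R]\<close> into that of
  \<open>u(t)/t\<close> over \<open>(2s, 2R]\<close>, so all but the two end pieces cancel.\<close>
lemma nn_integral_dyadic_telescope:
  fixes u :: "real \<Rightarrow> real"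
  assumes [measurable]: "u \<in> borel_measurable borel"
    and nonneg: "\<And>t. 0 < t \<Longrightarrow> 0 \<le> u t" and dec: "decreasing_pos u"
    and "0 < s" and "2 * s \<le> R"
  shows "(\<integral>\<^sup>+t\<in>{s<..R}. ennreal ((u t - u (2 * t)) / t) \<partial>lborel)
      + (\<integral>\<^sup>+t\<in>{R<..2 * R}. ennreal (u t / t) \<partial>lborel)
    = (\<integral>\<^sup>+t\<in>{s<..2 * s}. ennreal (u t / t) \<partial>lborel)"
proof -
  define J where "J a b = (\<integral>\<^sup>+t\<in>{a<..b}. ennreal (u t / t) \<partial>lborel)" for a b
  define P where "P = (\<integral>\<^sup>+t\<in>{s<..R}. ennreal ((u t - u (2 * t)) / t) \<partial>lborel)"
  have J_split: "J a c = J a b + J b c" if "a \<le> b" "b \<le> c" for a b c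
    unfolding J_def using that by (intro nn_integral_Ioc_split) simp_all
  have "ennreal ((u t - u (2 * t)) / t) + ennreal (u (2 * t) / t) = ennreal (u t / t)"
    if "0 < t" for t
  proof -
    have "u (2 * t) \<le> u t" using decreasing_posD[OF dec that, of "2 * t"] that by simp
    then have "0 \<le> (u t - u (2 * t)) / t" "0 \<le> u (2 * t) / t"
      using that nonneg[of "2 * t"] by simp_all
    then show ?thesis
      by (simp add: ennreal_plus[symmetric] diff_divide_distrib del: ennreal_plus)
  qed
  then have "J s R = P + (\<integral>\<^sup>+t\<in>{s<..R}. ennreal (u (2 * t) / t) \<partial>lborel)"
    unfolding P_def J_def using \<open>0 < s\<close>
    by (subst nn_integral_add[symmetric]) (auto intro!: nn_integral_cong simp: indicator_def)
  also have "(\<integral>\<^sup>+t\<in>{s<..R}. ennreal (u (2 * t) / t) \<partial>lborel) = J (2 * s) (2 * R)"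
    unfolding J_def by (rule nn_integral_Ioc_dilation) simp_all
  also have "J (2 * s) (2 * R) = J (2 * s) R + J R (2 * R)"
    using \<open>0 < s\<close> \<open>2 * s \<le> R\<close> by (intro J_split) simp_all
  finally have J_sR: "J s R = P + (J (2 * s) R + J R (2 * R))" .
  have "J (2 * s) R + J s (2 * s) = J s R"
    using J_split[of s "2 * s" R] \<open>0 < s\<close> \<open>2 * s \<le> R\<close> by (simp add: add.commute)
  also have "\<dots> = J (2 * s) R + (P + J R (2 * R))"
    unfolding J_sR by (rule add.left_commute)
  finally have "J (2 * s) R + J s (2 * s) = J (2 * s) R + (P + J R (2 * R))" .
  moreover have "J (2 * s) R \<noteq> \<infinity>"
    using nn_integral_Ioc_decreasing_div_bounds(2)[OF nonneg dec, of "2 * s" R] \<open>0 < s\<close> \<open>2 * s \<le> R\<close>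
    unfolding J_def by (auto simp: top_unique)
  ultimately show ?thesis
    unfolding P_def J_def by (simp add: ennreal_add_left_cancel)
qed

lemma nn_integral_dyadic_tail:
  fixes u :: "real \<Rightarrow> real"
  assumes [measurable]: "u \<in> borel_measurable borel"
    and nonneg: "\<And>t. 0 < t \<Longrightarrow> 0 \<le> u t" and dec: "decreasing_pos u"
    and lim: "(u \<longlongrightarrow> 0) at_top" and "0 < s"
  shows "(\<integral>\<^sup>+t\<in>{s<..}. ennreal ((u t - u (2 * t)) / t) \<partial>lborel)
    = (\<integral>\<^sup>+t\<in>{s<..2 * s}. ennreal (u t / t) \<partial>lborel)"
    (is "?tail = ?J")
proof (rule antisym)
  have telescope: "(\<integral>\<^sup>+t\<in>{s<..R}. ennreal ((u t - u (2 * t)) / t) \<partial>lborel)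
      + (\<integral>\<^sup>+t\<in>{R<..2 * R}. ennreal (u t / t) \<partial>lborel) = ?J" if "2 * s \<le> R" for R
    using nn_integral_dyadic_telescope[OF assms(1) nonneg dec \<open>0 < s\<close> that] .
  have "(\<integral>\<^sup>+t\<in>{s<..real n}. ennreal ((u t - u (2 * t)) / t) \<partial>lborel) \<le> ?J" for n
  proof -
    have "(\<integral>\<^sup>+t\<in>{s<..real n}. ennreal ((u t - u (2 * t)) / t) \<partial>lborel)
        \<le> (\<integral>\<^sup>+t\<in>{s<..max (real n) (2 * s)}. ennreal ((u t - u (2 * t)) / t) \<partial>lborel)"
      by (intro nn_integral_mono) (auto simp: indicator_def)
    also have "\<dots> \<le> (\<integral>\<^sup>+t\<in>{s<..max (real n) (2 * s)}. ennreal ((u t - u (2 * t)) / t) \<partial>lborel)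
        + (\<integral>\<^sup>+t\<in>{max (real n) (2 * s)<..2 * max (real n) (2 * s)}. ennreal (u t / t) \<partial>lborel)"
      by (rule add_increasing2) simp_all
    also have "\<dots> = ?J"
      by (rule telescope) simp
    finally show ?thesis .
  qed
  then show "?tail \<le> ?J"
    by (subst nn_integral_Ioi_eq_SUP) (simp_all add: SUP_least)
  show "?J \<le> ?tail"
  proof (rule ennreal_le_epsilon)
    fix e :: real assume "0 < e"
    then obtain R0 where R0: "\<And>R. R \<ge> R0 \<Longrightarrow> u R < e"
      using order_tendstoD(2)[OF lim] by (auto simp: eventually_at_top_linorder)
    define R where "R = max R0 (2 * s)"
    have R: "2 * s \<le> R" "0 < R" "u R < e" using \<open>0 < s\<close> R0 unfolding R_def by auto
    have "?J = (\<integral>\<^sup>+t\<in>{s<..R}. ennreal ((u t - u (2 * t)) / t) \<partial>lborel)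
        + (\<integral>\<^sup>+t\<in>{R<..2 * R}. ennreal (u t / t) \<partial>lborel)"
      using telescope[OF R(1)] ..
    also have "\<dots> \<le> ?tail + ennreal (u R / R * (2 * R - R))"
      using nn_integral_Ioc_decreasing_div_bounds(2)[OF nonneg dec R(2), of "2 * R"] R(2)
      by (intro add_mono nn_integral_mono) (auto simp: indicator_def)
    also have "\<dots> \<le> ?tail + ennreal e"
      using R by (intro add_mono ennreal_leI) auto
    finally show "?J \<le> ?tail + ennreal e" .
  qed
qed

section \<open>Comparison of the norms\<close>

lemma maxfun_mult_ennreal:
  assumes "0 < t"
  shows "maxfun f t * ennreal c = (\<integral>\<^sup>+s\<in>{0<..<t}. rearr f s \<partial>lborel) * ennreal (c / t)"
proof -
  have "maxfun f t * ennreal c = (\<integral>\<^sup>+s\<in>{0<..<t}. rearr f s \<partial>lborel) * (ennreal (1 / t) * ennreal c)"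
    unfolding maxfun_def by (simp only: ac_simps)
  also have "ennreal (1 / t) * ennreal c = ennreal (c / t)"
    using assms by (simp add: ennreal_mult'[symmetric])
  finally show ?thesis .
qed

text \<open>Fubini turns the averaging operator into its adjoint, a Hardy-type tail integral.\<close>
lemma gamma_norm_eq_tail_integral:
  fixes f :: "'a::euclidean_space \<Rightarrow> real"
  assumes v: "zero_ext v \<in> borel_measurable borel"
  shows "gamma_norm v f = (\<integral>\<^sup>+s\<in>{0<..}. rearr f s * (\<integral>\<^sup>+t\<in>{s<..}. ennreal (v t / t) \<partial>lborel) \<partial>lborel)"
proof -
  define F :: "real \<Rightarrow> real \<Rightarrow> ennreal"
    where "F t s = rearr f s * indicator {0<..<t} s * ennreal (zero_ext v t / t)" for t s
  have [measurable]: "zero_ext v \<in> borel_measurable lborel"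
    using v by simp
  have F_measurable: "case_prod (\<lambda>s t. F t s) \<in> borel_measurable (lborel \<Otimes>\<^sub>M lborel)"
    unfolding F_def indicator_def greaterThanLessThan_iff by measurable
  have "maxfun f t * ennreal (v t) * indicator {0<..} t = (\<integral>\<^sup>+s. F t s \<partial>lborel)" for t
  proof (cases "0 < t")
    case True
    then have "maxfun f t * ennreal (v t)
        = (\<integral>\<^sup>+s. rearr f s * indicator {0<..<t} s \<partial>lborel) * ennreal (zero_ext v t / t)"
      by (simp add: maxfun_mult_ennreal zero_ext_def)
    also have "\<dots> = (\<integral>\<^sup>+s. F t s \<partial>lborel)"
      unfolding F_def by (rule nn_integral_multc[symmetric]) measurable
    finally show ?thesis using True by simp
  qed (simp add: F_def)
  then have "gamma_norm v f = (\<integral>\<^sup>+t. (\<integral>\<^sup>+s. F t s \<partial>lborel) \<partial>lborel)"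
    unfolding gamma_norm_def by simp
  also have "\<dots> = (\<integral>\<^sup>+s. (\<integral>\<^sup>+t. F t s \<partial>lborel) \<partial>lborel)"
    by (rule lborel_pair.Fubini'[OF F_measurable])
  also have "\<dots> = (\<integral>\<^sup>+s\<in>{0<..}. rearr f s * (\<integral>\<^sup>+t\<in>{s<..}. ennreal (v t / t) \<partial>lborel) \<partial>lborel)"
  proof (intro nn_integral_cong)
    fix s :: real
    show "(\<integral>\<^sup>+t. F t s \<partial>lborel)
        = rearr f s * (\<integral>\<^sup>+t\<in>{s<..}. ennreal (v t / t) \<partial>lborel) * indicator {0<..} s"
    proof (cases "0 < s")
      case True
      have "(\<integral>\<^sup>+t. F t s \<partial>lborel)
          = (\<integral>\<^sup>+t. rearr f s * (ennreal (zero_ext v t / t) * indicator {s<..} t) \<partial>lborel)"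
        unfolding F_def using True by (intro nn_integral_cong) (auto simp: indicator_def)
      also have "\<dots> = rearr f s * (\<integral>\<^sup>+t\<in>{s<..}. ennreal (zero_ext v t / t) \<partial>lborel)"
        by (rule nn_integral_cmult) measurable
      also have "(\<integral>\<^sup>+t\<in>{s<..}. ennreal (zero_ext v t / t) \<partial>lborel)
          = (\<integral>\<^sup>+t\<in>{s<..}. ennreal (v t / t) \<partial>lborel)"
        using True by (intro nn_integral_cong) (auto simp: zero_ext_def indicator_def)
      finally show ?thesis using True by simp
    qed (simp add: F_def)
  qed
  finally show ?thesis .
qed

lemma dyadic_tail_bounds:
  assumes wt: "weight w" and dec: "decreasing_pos w" and "0 < s"
  shows "(\<integral>\<^sup>+t\<in>{s<..}. ennreal (dyadic_diff w t / t) \<partial>lborel) \<le> ennreal (w s - winf w)"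
    and "ennreal (w (2 * s) - winf w) \<le> 2 * (\<integral>\<^sup>+t\<in>{s<..}. ennreal (dyadic_diff w t / t) \<partial>lborel)"
proof -
  define u where "u t = zero_ext w t - winf w" for t
  have [measurable]: "u \<in> borel_measurable borel"
    using weight_zero_ext_measurable[OF wt] unfolding u_def by measurable
  have u_pos: "u t = w t - winf w" if "0 < t" for t
    using that by (simp add: u_def zero_ext_def)
  have u_nonneg: "0 \<le> u t" if "0 < t" for t
    using winf_le[OF wt dec that] u_pos[OF that] by simp
  have u_dec: "decreasing_pos u"
    using dec unfolding decreasing_pos_def u_def zero_ext_def by auto
  have "((\<lambda>t. w t - winf w) \<longlongrightarrow> winf w - winf w) at_top"
    by (intro tendsto_diff tendsto_winf[OF wt dec] tendsto_const)
  moreover have "eventually (\<lambda>t. w t - winf w = u t) at_top"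
    using eventually_gt_at_top[of 0] by eventually_elim (simp add: u_pos)
  ultimately have u_lim: "(u \<longlongrightarrow> 0) at_top"
    by (simp add: tendsto_cong)
  have "(\<integral>\<^sup>+t\<in>{s<..}. ennreal (dyadic_diff w t / t) \<partial>lborel)
      = (\<integral>\<^sup>+t\<in>{s<..}. ennreal ((u t - u (2 * t)) / t) \<partial>lborel)"
    using \<open>0 < s\<close> by (intro nn_integral_cong) (auto simp: indicator_def u_pos dyadic_diff_def)
  also have "\<dots> = (\<integral>\<^sup>+t\<in>{s<..2 * s}. ennreal (u t / t) \<partial>lborel)"
    by (rule nn_integral_dyadic_tail[OF _ u_nonneg u_dec u_lim \<open>0 < s\<close>]) simp
  finally have tail: "(\<integral>\<^sup>+t\<in>{s<..}. ennreal (dyadic_diff w t / t) \<partial>lborel)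
      = (\<integral>\<^sup>+t\<in>{s<..2 * s}. ennreal (u t / t) \<partial>lborel)" .
  note bounds = nn_integral_Ioc_decreasing_div_bounds[OF u_nonneg u_dec \<open>0 < s\<close>, of "2 * s"]
  show "(\<integral>\<^sup>+t\<in>{s<..}. ennreal (dyadic_diff w t / t) \<partial>lborel) \<le> ennreal (w s - winf w)"
    using bounds(2) \<open>0 < s\<close> by (simp add: tail u_pos)
  have "ennreal (w (2 * s) - winf w) = 2 * ennreal ((w (2 * s) - winf w) / 2)"
  proof -
    have "ennreal (w (2 * s) - winf w) = ennreal (2 * ((w (2 * s) - winf w) / 2))"
      by (rule arg_cong[where f = ennreal]) (simp add: field_simps)
    also have "\<dots> = 2 * ennreal ((w (2 * s) - winf w) / 2)"
      by (subst ennreal_mult') simp_all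
    finally show ?thesis .
  qed
  also have "\<dots> \<le> 2 * (\<integral>\<^sup>+t\<in>{s<..}. ennreal (dyadic_diff w t / t) \<partial>lborel)"
    using bounds(1) \<open>0 < s\<close> by (intro mult_left_mono) (simp_all add: tail u_pos)
  finally show "ennreal (w (2 * s) - winf w) \<le> 2 * (\<integral>\<^sup>+t\<in>{s<..}. ennreal (dyadic_diff w t / t) \<partial>lborel)" .
qed

lemma lambda_norm_eq_zero_ext: "lambda_norm w f = (\<integral>\<^sup>+t. rearr f t * ennreal (zero_ext w t) \<partial>lborel)"
  unfolding lambda_norm_def by (intro nn_integral_cong) (simp add: zero_ext_def indicator_def)

lemma gamma_norm_dyadic_le_lambda_norm:
  fixes f :: "'a::euclidean_space \<Rightarrow> real"
  assumes wt: "weight w" and dec: "decreasing_pos w"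
  shows "gamma_norm (dyadic_diff w) f \<le> lambda_norm w f"
proof -
  have "zero_ext (dyadic_diff w) \<in> borel_measurable borel"
    by (intro weight_zero_ext_measurable weight_dyadic_diff wt dec)
  then have "gamma_norm (dyadic_diff w) f
      = (\<integral>\<^sup>+s\<in>{0<..}. rearr f s * (\<integral>\<^sup>+t\<in>{s<..}. ennreal (dyadic_diff w t / t) \<partial>lborel) \<partial>lborel)"
    by (rule gamma_norm_eq_tail_integral)
  also have "\<dots> \<le> (\<integral>\<^sup>+s\<in>{0<..}. rearr f s * ennreal (w s) \<partial>lborel)"
  proof (intro nn_integral_mono)
    fix s :: real
    have "ennreal (w s - winf w) \<le> ennreal (w s)"
      using winf_nonneg[OF wt dec] by (intro ennreal_leI) simp
    then have "(\<integral>\<^sup>+t\<in>{s<..}. ennreal (dyadic_diff w t / t) \<partial>lborel) \<le> ennreal (w s)" if "0 < s"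
      using dyadic_tail_bounds(1)[OF wt dec that] by (rule order_trans[rotated])
    then show "rearr f s * (\<integral>\<^sup>+t\<in>{s<..}. ennreal (dyadic_diff w t / t) \<partial>lborel) * indicator {0<..} s
        \<le> rearr f s * ennreal (w s) * indicator {0<..} s"
      by (auto simp: indicator_def intro: mult_left_mono)
  qed
  finally show ?thesis unfolding lambda_norm_def .
qed

text \<open>After the substitution \<open>t \<mapsto> 2t\<close> the integrand is dominated pointwise by the lower
  bound of \<open>dyadic_tail_bounds\<close>.\<close>
lemma nn_integral_rearr_excess_le_gamma_norm:
  fixes f :: "'a::euclidean_space \<Rightarrow> real"
  assumes wt: "weight w" and dec: "decreasing_pos w"
  shows "(\<integral>\<^sup>+t. rearr f t * ennreal (zero_ext w t - winf w) \<partial>lborel) \<le> 4 * gamma_norm (dyadic_diff w) f"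
proof -
  define V where "V s = (\<integral>\<^sup>+t\<in>{s<..}. ennreal (dyadic_diff w t / t) \<partial>lborel)" for s
  have [measurable]: "zero_ext w \<in> borel_measurable borel"
    by (rule weight_zero_ext_measurable[OF wt])
  have [measurable]: "V \<in> borel_measurable borel"
    unfolding V_def
    by (intro borel_measurable_antimono_ennreal nn_integral_mono) (auto simp: indicator_def)
  have gamma_tail: "gamma_norm (dyadic_diff w) f = (\<integral>\<^sup>+s\<in>{0<..}. rearr f s * V s \<partial>lborel)"
    unfolding V_def
    by (intro gamma_norm_eq_tail_integral weight_zero_ext_measurable weight_dyadic_diff wt dec)
  have "(\<integral>\<^sup>+t. rearr f t * ennreal (zero_ext w t - winf w) \<partial>lborel)
      = 2 * (\<integral>\<^sup>+x. rearr f (2 * x) * ennreal (zero_ext w (2 * x) - winf w) \<partial>lborel)"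
    using nn_integral_real_affine[of "\<lambda>t. rearr f t * ennreal (zero_ext w t - winf w)" 2 0]
    by simp
  also have "\<dots> \<le> 2 * (\<integral>\<^sup>+x. 2 * (rearr f x * V x * indicator {0<..} x) \<partial>lborel)"
  proof (intro mult_left_mono nn_integral_mono)
    fix x :: real
    show "rearr f (2 * x) * ennreal (zero_ext w (2 * x) - winf w) \<le> 2 * (rearr f x * V x * indicator {0<..} x)"
    proof (cases "0 < x")
      case True
      then have "ennreal (zero_ext w (2 * x) - winf w) \<le> 2 * V x"
        using dyadic_tail_bounds(2)[OF wt dec True] by (simp add: zero_ext_def V_def)
      then have "rearr f (2 * x) * ennreal (zero_ext w (2 * x) - winf w) \<le> rearr f x * (2 * V x)"
        using True rearr_antimono[of x "2 * x" f] by (intro mult_mono) simp_all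
      then show ?thesis
        using True by (simp add: ac_simps)
    next
      case False
      then show ?thesis
        using winf_nonneg[OF wt dec] by (simp add: zero_ext_def ennreal_neg)
    qed
  qed simp
  also have "\<dots> = 4 * gamma_norm (dyadic_diff w) f"
    by (subst nn_integral_cmult) (simp_all add: gamma_tail mult.assoc[symmetric])
  finally show ?thesis .
qed

lemma lambda_norm_le_gamma_norm_dyadic:
  fixes f :: "'a::euclidean_space \<Rightarrow> real"
  assumes wt: "weight w" and dec: "decreasing_pos w" and f[measurable]: "f \<in> borel_measurable lebesgue"
  shows "lambda_norm w f \<le> 4 * gamma_norm (dyadic_diff w) f + ennreal (winf w) * L1_norm f"
proof -
  have [measurable]: "zero_ext w \<in> borel_measurable borel"
    by (rule weight_zero_ext_measurable[OF wt])
  have c: "0 \<le> winf w" "\<And>t. 0 < t \<Longrightarrow> winf w \<le> w t"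
    using winf_nonneg[OF wt dec] winf_le[OF wt dec] by auto
  have "ennreal (zero_ext w t) = ennreal (zero_ext w t - winf w) + ennreal (winf w) * indicator {0<..} t" for t
    using c by (cases "0 < t") (auto simp: zero_ext_def ennreal_neg ennreal_plus[symmetric])
  then have "lambda_norm w f = (\<integral>\<^sup>+t. rearr f t * ennreal (zero_ext w t - winf w)
      + ennreal (winf w) * (rearr f t * indicator {0<..} t) \<partial>lborel)"
    unfolding lambda_norm_eq_zero_ext by (simp add: distrib_left ac_simps)
  also have "\<dots> = (\<integral>\<^sup>+t. rearr f t * ennreal (zero_ext w t - winf w) \<partial>lborel)
      + ennreal (winf w) * L1_norm f"
    by (simp add: nn_integral_add nn_integral_cmult L1_norm_eq_nn_integral_rearr)
  also have "\<dots> \<le> 4 * gamma_norm (dyadic_diff w) f + ennreal (winf w) * L1_norm f"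
    using nn_integral_rearr_excess_le_gamma_norm[OF wt dec] by (rule add_right_mono)
  finally show ?thesis .
qed

lemma lambda_norm_le_L1_norm:
  fixes f :: "'a::euclidean_space \<Rightarrow> real"
  assumes [measurable]: "f \<in> borel_measurable lebesgue" and "\<And>t. 0 < t \<Longrightarrow> w t \<le> B"
  shows "lambda_norm w f \<le> ennreal B * L1_norm f"
proof -
  have "lambda_norm w f \<le> (\<integral>\<^sup>+t\<in>{0<..}. ennreal B * rearr f t \<partial>lborel)"
    unfolding lambda_norm_def using assms(2)
    by (intro nn_integral_mono)
      (auto simp: indicator_def mult.commute[of "ennreal B"] intro!: mult_left_mono ennreal_leI)
  then show ?thesis
    by (simp add: nn_integral_cmult L1_norm_eq_nn_integral_rearr mult.assoc)
qed

lemma L1_norm_le_lambda_norm: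
  fixes f :: "'a::euclidean_space \<Rightarrow> real"
  assumes [measurable]: "f \<in> borel_measurable lebesgue" and "\<And>t. 0 < t \<Longrightarrow> c \<le> w t"
  shows "ennreal c * L1_norm f \<le> lambda_norm w f"
proof -
  have "(\<integral>\<^sup>+t\<in>{0<..}. ennreal c * rearr f t \<partial>lborel) \<le> lambda_norm w f"
    unfolding lambda_norm_def using assms(2)
    by (intro nn_integral_mono)
      (auto simp: indicator_def mult.commute[of "ennreal c"] intro!: mult_left_mono ennreal_leI)
  then show ?thesis
    by (simp add: nn_integral_cmult L1_norm_eq_nn_integral_rearr mult.assoc)
qed

section \<open>Indicators of cubes\<close>

definition cube_indicator :: "real \<Rightarrow> 'a::euclidean_space \<Rightarrow> real" where
  "cube_indicator a = indicator (cbox 0 (\<Sum>b\<in>Basis. root DIM('a) a *\<^sub>R b))"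

lemma emeasure_cube_indicator_support:
  assumes "0 \<le> a"
  shows "emeasure lebesgue (cbox (0::'a::euclidean_space) (\<Sum>b\<in>Basis. root DIM('a) a *\<^sub>R b)) = ennreal a"
proof -
  have "emeasure lborel (cbox (0::'a) (\<Sum>b\<in>Basis. root DIM('a) a *\<^sub>R b))
      = ennreal (\<Prod>b\<in>(Basis::'a set). root DIM('a) a)"
    unfolding emeasure_lborel_cbox_eq using assms by (simp add: inner_sum_left_Basis)
  then show ?thesis using assms by simp
qed

lemma cube_indicator_measurable[measurable]: "cube_indicator a \<in> borel_measurable lebesgue"
  unfolding cube_indicator_def by (intro borel_measurable_indicator) simp

lemma rearr_cube_indicator:
  assumes "0 < a" and "0 \<le> t"
  shows "rearr (cube_indicator a :: 'a::euclidean_space \<Rightarrow> real) t = (if t < a then 1 else 0)"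
proof -
  have distrib: "distrib_fun (cube_indicator a :: 'a \<Rightarrow> real) \<sigma> = (if \<sigma> < 1 then ennreal a else 0)" for \<sigma>
  proof -
    have "{x. \<sigma> < ennreal \<bar>cube_indicator a x\<bar>}
        = (if \<sigma> < 1 then cbox (0::'a) (\<Sum>b\<in>Basis. root DIM('a) a *\<^sub>R b) else {})"
      by (auto simp: cube_indicator_def indicator_def not_less intro: le_less_trans)
    then show ?thesis
      unfolding distrib_fun_def using emeasure_cube_indicator_support[of a] assms by simp
  qed
  show ?thesis
  proof (cases "t < a")
    case True
    then have "{s. distrib_fun (cube_indicator a :: 'a \<Rightarrow> real) s \<le> ennreal t} = {1..}"
      using assms by (auto simp: distrib not_less)
    then show ?thesis using True unfolding rearr_def by simp
  next
    case False
    then have "{s. distrib_fun (cube_indicator a :: 'a \<Rightarrow> real) s \<le> ennreal t} = UNIV"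
      using assms by (auto simp: distrib ennreal_leI)
    then show ?thesis using False unfolding rearr_def by (simp add: bot_ennreal)
  qed
qed

lemma L1_norm_cube_indicator:
  assumes "0 \<le> a"
  shows "L1_norm (cube_indicator a :: 'a::euclidean_space \<Rightarrow> real) = ennreal a"
proof -
  have "L1_norm (cube_indicator a :: 'a \<Rightarrow> real)
      = (\<integral>\<^sup>+x. indicator (cbox (0::'a) (\<Sum>b\<in>Basis. root DIM('a) a *\<^sub>R b)) x \<partial>lebesgue)"
    unfolding L1_norm_def cube_indicator_def by (simp add: ennreal_indicator)
  also have "\<dots> = emeasure lebesgue (cbox (0::'a) (\<Sum>b\<in>Basis. root DIM('a) a *\<^sub>R b))"
    by (rule nn_integral_indicator) simp
  finally show ?thesis using emeasure_cube_indicator_support[OF assms, where 'a='a] by simp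
qed

lemma lambda_norm_cube_indicator:
  assumes "0 < a"
  shows "lambda_norm w (cube_indicator a :: 'a::euclidean_space \<Rightarrow> real)
    = (\<integral>\<^sup>+t\<in>{0<..<a}. ennreal (w t) \<partial>lborel)"
  unfolding lambda_norm_def using rearr_cube_indicator[OF assms, where 'a='a]
  by (intro nn_integral_cong) (auto simp: indicator_def)

lemma gamma_norm_cube_indicator:
  assumes "0 < a"
  shows "gamma_norm v (cube_indicator a :: 'a::euclidean_space \<Rightarrow> real)
    = (\<integral>\<^sup>+t\<in>{0<..}. ennreal (min 1 (a / t)) * ennreal (v t) \<partial>lborel)"
proof -
  have "maxfun (cube_indicator a :: 'a \<Rightarrow> real) t = ennreal (min 1 (a / t))" if "0 < t" for t
  proof -
    have "(\<integral>\<^sup>+s\<in>{0<..<t}. rearr (cube_indicator a :: 'a \<Rightarrow> real) s \<partial>lborel)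
        = (\<integral>\<^sup>+s. indicator {0<..<min t a} s \<partial>lborel)"
      using rearr_cube_indicator[OF assms, where 'a='a]
      by (intro nn_integral_cong) (auto simp: indicator_def)
    then show ?thesis
      using that assms unfolding maxfun_def
      by (simp add: ennreal_mult'[symmetric] min_mult_distrib_left)
  qed
  then show ?thesis
    unfolding gamma_norm_def by (intro nn_integral_cong) (auto simp: indicator_def)
qed

lemma lambda_norm_cube_indicator_ge:
  assumes "weight w" and dec: "decreasing_pos w" and "0 < a"
  shows "ennreal (w a * a) \<le> lambda_norm w (cube_indicator a :: 'a::euclidean_space \<Rightarrow> real)"
proof -
  have "ennreal (w a * a) = (\<integral>\<^sup>+t\<in>{0<..<a}. ennreal (w a) \<partial>lborel)"
    using assms weight_nonneg by (simp add: nn_integral_cmult_indicator ennreal_mult)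
  also have "\<dots> \<le> (\<integral>\<^sup>+t\<in>{0<..<a}. ennreal (w t) \<partial>lborel)"
  proof (intro nn_integral_mono)
    fix t :: real
    show "ennreal (w a) * indicator {0<..<a} t \<le> ennreal (w t) * indicator {0<..<a} t"
      using decreasing_posD[OF dec, of t a] by (simp add: indicator_def ennreal_leI)
  qed
  finally show ?thesis by (simp add: lambda_norm_cube_indicator[OF \<open>0 < a\<close>])
qed

lemma lambda_norm_cube_indicator_le:
  assumes "weight w" and dec: "decreasing_pos w" and "0 < t0" and "0 < a"
  shows "lambda_norm w (cube_indicator a :: 'a::euclidean_space \<Rightarrow> real)
    \<le> (\<integral>\<^sup>+t\<in>{0<..<t0}. ennreal (w t) \<partial>lborel) + ennreal (w t0 * a)"
proof -
  have "lambda_norm w (cube_indicator a :: 'a \<Rightarrow> real)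
      \<le> (\<integral>\<^sup>+t. ennreal (w t) * indicator {0<..<t0} t + ennreal (w t0) * indicator {0<..<a} t \<partial>lborel)"
    unfolding lambda_norm_cube_indicator[OF \<open>0 < a\<close>]
  proof (intro nn_integral_mono)
    fix t :: real
    show "ennreal (w t) * indicator {0<..<a} t
        \<le> ennreal (w t) * indicator {0<..<t0} t + ennreal (w t0) * indicator {0<..<a} t"
    proof (cases "t0 \<le> t")
      case True
      then show ?thesis
        using decreasing_posD[OF dec \<open>0 < t0\<close> True] by (simp add: indicator_def ennreal_leI)
    qed (simp add: indicator_def)
  qed
  also have "\<dots> = (\<integral>\<^sup>+t\<in>{0<..<t0}. ennreal (w t) \<partial>lborel)
      + (\<integral>\<^sup>+t. ennreal (w t0) * indicator {0<..<a} t \<partial>lborel)"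
  proof -
    have [measurable]: "zero_ext w \<in> borel_measurable borel"
      by (rule weight_zero_ext_measurable) fact
    have "(\<lambda>t. ennreal (w t) * indicator {0<..<t0} t) = (\<lambda>t. ennreal (zero_ext w t) * indicator {0<..<t0} t)"
      by (auto simp: zero_ext_def indicator_def)
    then have "(\<lambda>t. ennreal (w t) * indicator {0<..<t0} t) \<in> borel_measurable lborel"
      by simp
    then show ?thesis by (rule nn_integral_add) simp
  qed
  also have "(\<integral>\<^sup>+t. ennreal (w t0) * indicator {0<..<a} t \<partial>lborel) = ennreal (w t0 * a)"
    using assms weight_nonneg[of w t0] by (simp add: nn_integral_cmult_indicator ennreal_mult)
  finally show ?thesis .
qed

lemma INF_min_inverse_Suc_mult_eq_0:
  "(INF n::nat. ennreal (min (1 / Suc n) (1 / t)) * ennreal x) = 0"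
proof -
  define p where "p = max 0 x"
  have bound: "(INF n. ennreal (min (1 / Suc n) (1 / t)) * ennreal x) \<le> ennreal e" if "0 < e" for e
  proof -
    obtain n :: nat where "p / e < real n" using reals_Archimedean2 by blast
    then have "p / Suc n \<le> e"
      using \<open>0 < e\<close> by (simp add: field_simps p_def)
    have "(INF n. ennreal (min (1 / Suc n) (1 / t)) * ennreal x)
        \<le> ennreal (min (1 / Suc n) (1 / t)) * ennreal x"
      by (rule INF_lower) simp
    also have "\<dots> \<le> ennreal (1 / Suc n) * ennreal p"
      unfolding p_def by (intro mult_mono ennreal_leI) auto
    also have "\<dots> = ennreal (p / Suc n)"
      by (simp add: ennreal_mult'[symmetric])
    also have "\<dots> \<le> ennreal e"
      using \<open>p / Suc n \<le> e\<close> by (rule ennreal_leI)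
    finally show ?thesis .
  qed
  have "(INF n. ennreal (min (1 / Suc n) (1 / t)) * ennreal x) \<le> 0"
  proof (rule ennreal_le_epsilon)
    fix e :: real assume "0 < e"
    then show "(INF n. ennreal (min (1 / Suc n) (1 / t)) * ennreal x) \<le> 0 + ennreal e"
      using bound by simp
  qed
  then show ?thesis by simp
qed

lemma INF_nn_integral_min_inverse_eq_0:
  fixes g :: "real \<Rightarrow> real"
  assumes [measurable]: "g \<in> borel_measurable borel"
    and finite: "(\<integral>\<^sup>+t. ennreal (min 1 (1 / t)) * ennreal (g t) \<partial>lborel) < \<infinity>"
  shows "(INF n. \<integral>\<^sup>+t. ennreal (min (1 / Suc n) (1 / t)) * ennreal (g t) \<partial>lborel) = 0"
proof -
  define h where "h n t = ennreal (min (1 / Suc n) (1 / t)) * ennreal (g t)" for n :: nat and t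
  have h_measurable: "h n \<in> borel_measurable lborel" for n
    unfolding h_def by measurable
  have h_decseq: "decseq h"
  proof (intro decseq_SucI le_funI)
    fix n t
    have "1 / real (Suc (Suc n)) \<le> 1 / real (Suc n)" by (rule divide_left_mono) auto
    then show "h (Suc n) t \<le> h n t"
      unfolding h_def by (intro mult_right_mono ennreal_leI) auto
  qed
  have "(\<integral>\<^sup>+t. h 0 t \<partial>lborel) < \<infinity>"
    using finite by (simp add: h_def)
  then have INF_integral: "(INF n. \<integral>\<^sup>+t. h n t \<partial>lborel) = (\<integral>\<^sup>+t. (INF n. h n t) \<partial>lborel)"
    by (rule nn_integral_monotone_convergence_INF_decseq[symmetric, OF h_decseq h_measurable])
  have "(INF n. h n t) = 0" for t
    unfolding h_def by (rule INF_min_inverse_Suc_mult_eq_0)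
  then show ?thesis
    using INF_integral by (simp add: h_def)
qed

text \<open>\<open>gamma_norm v (cube_indicator a) / a\<close> is the integral of \<open>min (1/a) (1/t) v(t)\<close>,
  which decreases to 0 by monotone convergence.\<close>
lemma gamma_norm_cube_indicator_sublinear:
  fixes C :: real
  assumes v[measurable]: "zero_ext v \<in> borel_measurable borel"
    and finite: "gamma_norm v (cube_indicator 1 :: 'a::euclidean_space \<Rightarrow> real) < \<infinity>"
  shows "\<exists>a>0. ennreal C * gamma_norm v (cube_indicator a :: 'a \<Rightarrow> real) < ennreal a"
proof -
  define I where "I n = (\<integral>\<^sup>+t. ennreal (min (1 / Suc n) (1 / t)) * ennreal (zero_ext v t) \<partial>lborel)"
    for n :: nat
  have gamma_I: "gamma_norm v (cube_indicator (Suc n) :: 'a \<Rightarrow> real) = ennreal (Suc n) * I n" for n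
  proof -
    have "ennreal (min 1 (Suc n / t)) * ennreal (v t) * indicator {0<..} t
        = ennreal (Suc n) * (ennreal (min (1 / Suc n) (1 / t)) * ennreal (zero_ext v t))" for t
    proof -
      have "min 1 (Suc n / t) = Suc n * min (1 / Suc n) (1 / t)"
        by (simp add: min_mult_distrib_left)
      then show ?thesis
        by (simp add: zero_ext_def ennreal_mult' mult.assoc)
    qed
    then show ?thesis
      unfolding I_def by (simp add: gamma_norm_cube_indicator nn_integral_cmult)
  qed
  define K where "K = max C 0 + 1"
  have K: "0 < K" "C \<le> K" unfolding K_def by auto
  have "(INF n. I n) = 0"
    unfolding I_def using finite gamma_I[of 0]
    by (intro INF_nn_integral_min_inverse_eq_0) (simp_all add: I_def)
  moreover have "0 < ennreal (1 / K)"
    using K by simp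
  ultimately have "(INF n. I n) < ennreal (1 / K)"
    by (simp only:)
  then obtain n where n: "I n < ennreal (1 / K)"
    unfolding INF_less_iff by blast
  have "ennreal C * gamma_norm v (cube_indicator (Suc n) :: 'a \<Rightarrow> real) \<le> ennreal K * (ennreal (Suc n) * I n)"
    unfolding gamma_I using K by (intro mult_right_mono ennreal_leI) simp_all
  also have "\<dots> < ennreal K * (ennreal (Suc n) * ennreal (1 / K))"
    using n K by (intro ennreal_mult_strict_left_mono) (simp_all add: add_pos_nonneg)
  also have "\<dots> = ennreal (Suc n) * (ennreal K * ennreal (1 / K))"
    by (rule mult.left_commute)
  also have "ennreal K * ennreal (1 / K) = 1"
    using K by (simp add: ennreal_mult'[symmetric])
  finally show ?thesis by (intro exI[of _ "real (Suc n)"]) simp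
qed

section \<open>Inclusions between the spaces\<close>

lemma space_inclI:
  assumes "\<And>f. f \<in> borel_measurable lebesgue \<Longrightarrow> NY f \<le> ennreal C * NX f"
  shows "space_incl NX NY"
  unfolding space_incl_def
proof (intro exI[of _ "max C 1"] conjI ballI)
  fix f :: "'a \<Rightarrow> real" assume "f \<in> borel_measurable lebesgue"
  then have "NY f \<le> ennreal C * NX f" by (rule assms)
  also have "\<dots> \<le> ennreal (max C 1) * NX f"
    by (intro mult_right_mono ennreal_leI) simp_all
  finally show "NY f \<le> ennreal (max C 1) * NX f" .
qed simp

lemma space_incl_refl: "space_incl N N"
  by (rule space_inclI[where C = 1]) simp

lemma space_incl_trans:
  assumes "space_incl NX NY" and "space_incl NY NZ"
  shows "space_incl NX NZ"
proof -
  obtain C D where C: "0 < C" "\<forall>f\<in>borel_measurable lebesgue. NY f \<le> ennreal C * NX f"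
    and D: "0 < D" "\<forall>f\<in>borel_measurable lebesgue. NZ f \<le> ennreal D * NY f"
    using assms unfolding space_incl_def by blast
  show ?thesis
  proof (rule space_inclI[where C = "D * C"])
    fix f :: "'a \<Rightarrow> real" assume f: "f \<in> borel_measurable lebesgue"
    then have "NZ f \<le> ennreal D * NY f" using D by blast
    also have "\<dots> \<le> ennreal D * (ennreal C * NX f)" using C f by (intro mult_left_mono) auto
    finally show "NZ f \<le> ennreal (D * C) * NX f"
      using C D by (simp add: ennreal_mult mult.assoc)
  qed
qed

lemma space_incl_add_left: "space_incl (\<lambda>f. NX f + NY f) NX"
  by (rule space_inclI[where C = 1]) (simp add: add_increasing2)

lemma space_incl_add_right: "space_incl (\<lambda>f. NX f + NY f) NY"
  by (rule space_inclI[where C = 1]) (simp add: add_increasing)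

lemma space_incl_add:
  assumes "space_incl NX NY" and "space_incl NX NZ"
  shows "space_incl NX (\<lambda>f. NY f + NZ f)"
proof -
  obtain C D where C: "0 < C" "\<forall>f\<in>borel_measurable lebesgue. NY f \<le> ennreal C * NX f"
    and D: "0 < D" "\<forall>f\<in>borel_measurable lebesgue. NZ f \<le> ennreal D * NX f"
    using assms unfolding space_incl_def by blast
  show ?thesis
  proof (rule space_inclI[where C = "C + D"])
    fix f :: "'a \<Rightarrow> real" assume "f \<in> borel_measurable lebesgue"
    then have "NY f + NZ f \<le> ennreal C * NX f + ennreal D * NX f"
      using C D by (intro add_mono) auto
    then show "NY f + NZ f \<le> ennreal (C + D) * NX f"
      using C D by (simp add: distrib_right ennreal_plus)
  qed
qed

lemma space_incl_finite:
  assumes "space_incl NX NY" and "f \<in> borel_measurable lebesgue" and "NX f < \<infinity>"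
  shows "NY f < \<infinity>"
proof -
  obtain C where "NY f \<le> ennreal C * NX f"
    using assms(1,2) unfolding space_incl_def by blast
  also have "\<dots> < \<infinity>" using assms(3) by (simp add: ennreal_mult_less_top)
  finally show ?thesis .
qed

lemma lambda_norm_cube_indicator_finite:
  assumes "weight w" and "0 < a"
  shows "lambda_norm w (cube_indicator a :: 'a::euclidean_space \<Rightarrow> real) < \<infinity>"
  using weight_nn_integral_Ioo_finite[OF assms] by (simp add: lambda_norm_cube_indicator[OF \<open>0 < a\<close>])

lemma space_incl_lambda_L1_imp_winf_pos:
  assumes wt: "weight w" and dec: "decreasing_pos w"
    and "space_incl (lambda_norm w) (L1_norm :: ('a::euclidean_space \<Rightarrow> real) \<Rightarrow> ennreal)"
  shows "0 < winf w"
proof (rule ccontr)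
  assume "\<not> 0 < winf w"
  obtain C where C: "0 < C"
    "\<And>f. f \<in> borel_measurable lebesgue \<Longrightarrow> L1_norm (f :: 'a \<Rightarrow> real) \<le> ennreal C * lambda_norm w f"
    using assms(3) unfolding space_incl_def by blast
  from \<open>\<not> 0 < winf w\<close> have "(w \<longlongrightarrow> 0) at_top"
    using tendsto_winf[OF wt dec] winf_nonneg[OF wt dec] by simp
  moreover have "0 < 1 / (2 * C)" using C(1) by simp
  ultimately have "eventually (\<lambda>t. w t < 1 / (2 * C)) at_top"
    by (rule order_tendstoD)
  then obtain N where N: "\<And>t. N \<le> t \<Longrightarrow> w t < 1 / (2 * C)"
    by (auto simp: eventually_at_top_linorder)
  define t0 where "t0 = max N 1"
  have t0: "0 < t0" "w t0 < 1 / (2 * C)"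
    using N[of t0] unfolding t0_def by auto
  obtain i where i: "(\<integral>\<^sup>+t\<in>{0<..<t0}. ennreal (w t) \<partial>lborel) = ennreal i" "0 \<le> i"
    using weight_nn_integral_Ioo_finite[OF wt t0(1)] by (cases "\<integral>\<^sup>+t\<in>{0<..<t0}. ennreal (w t) \<partial>lborel") auto
  define a where "a = 2 * (C * i) + 1"
  have a: "0 < a" using C(1) i(2) unfolding a_def by (simp add: add_nonneg_pos)
  have "ennreal a = L1_norm (cube_indicator a :: 'a \<Rightarrow> real)"
    using a by (simp add: L1_norm_cube_indicator)
  also have "\<dots> \<le> ennreal C * lambda_norm w (cube_indicator a :: 'a \<Rightarrow> real)"
    by (rule C(2)) simp
  also have "\<dots> \<le> ennreal C * (ennreal i + ennreal (w t0 * a))"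
    using lambda_norm_cube_indicator_le[OF wt dec t0(1) a, where 'a='a] i by (intro mult_left_mono) simp_all
  also have "\<dots> = ennreal (C * (i + w t0 * a))"
    using C(1) i(2) weight_nonneg[OF wt t0(1)] a by (simp add: ennreal_mult ennreal_plus)
  finally have "a \<le> C * i + C * w t0 * a"
    using C(1) i(2) weight_nonneg[OF wt t0(1)] a
    by (subst (asm) ennreal_le_iff) (simp_all add: algebra_simps)
  moreover have "C * w t0 * a < 1 / 2 * a"
  proof (rule mult_strict_right_mono)
    show "C * w t0 < 1 / 2"
      using t0(2) C(1) by (simp add: field_simps)
  qed (rule a)
  ultimately show False
    using a_def by linarith
qed

lemma space_incl_lambda_L1_iff:
  assumes wt: "weight w" and dec: "decreasing_pos w"
  shows "space_incl (lambda_norm w) (L1_norm :: ('a::euclidean_space \<Rightarrow> real) \<Rightarrow> ennreal)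
    \<longleftrightarrow> 0 < winf w"
proof
  assume "0 < winf w"
  show "space_incl (lambda_norm w) (L1_norm :: ('a \<Rightarrow> real) \<Rightarrow> ennreal)"
  proof (rule space_inclI[where C = "1 / winf w"])
    fix f :: "'a \<Rightarrow> real" assume f: "f \<in> borel_measurable lebesgue"
    have "ennreal (winf w) * L1_norm f \<le> lambda_norm w f"
      by (rule L1_norm_le_lambda_norm[OF f winf_le[OF wt dec]])
    then have "ennreal (1 / winf w) * (ennreal (winf w) * L1_norm f) \<le> ennreal (1 / winf w) * lambda_norm w f"
      by (rule mult_left_mono) simp
    then show "L1_norm f \<le> ennreal (1 / winf w) * lambda_norm w f"
      using \<open>0 < winf w\<close> by (simp add: mult.assoc[symmetric] ennreal_mult'[symmetric])
  qed
qed (rule space_incl_lambda_L1_imp_winf_pos[OF wt dec])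

lemma space_incl_L1_lambda_iff:
  assumes wt: "weight w" and dec: "decreasing_pos w"
  shows "space_incl (L1_norm :: ('a::euclidean_space \<Rightarrow> real) \<Rightarrow> ennreal) (lambda_norm w)
    \<longleftrightarrow> Linfty_pos w"
proof
  assume "Linfty_pos w"
  then obtain B where "\<forall>t>0. w t \<le> B"
    using Linfty_pos_iff_bounded[OF wt dec] by blast
  then show "space_incl (L1_norm :: ('a \<Rightarrow> real) \<Rightarrow> ennreal) (lambda_norm w)"
    by (intro space_inclI[where C = B] lambda_norm_le_L1_norm) auto
next
  assume "space_incl (L1_norm :: ('a \<Rightarrow> real) \<Rightarrow> ennreal) (lambda_norm w)"
  then obtain D where D: "0 < D"
    "\<And>f. f \<in> borel_measurable lebesgue \<Longrightarrow> lambda_norm w (f :: 'a \<Rightarrow> real) \<le> ennreal D * L1_norm f"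
    unfolding space_incl_def by blast
  have "w t \<le> D" if t: "0 < t" for t
  proof -
    have "ennreal (w t * t) \<le> lambda_norm w (cube_indicator t :: 'a \<Rightarrow> real)"
      by (rule lambda_norm_cube_indicator_ge[OF wt dec t])
    also have "\<dots> \<le> ennreal D * L1_norm (cube_indicator t :: 'a \<Rightarrow> real)"
      by (rule D(2)) simp
    also have "\<dots> = ennreal (D * t)"
      using D(1) t by (simp add: L1_norm_cube_indicator ennreal_mult)
    finally show ?thesis
      using D(1) t by simp
  qed
  then show "Linfty_pos w"
    using Linfty_pos_iff_bounded[OF wt dec] by blast
qed

lemma space_incl_lambda_gamma_dyadic:
  assumes "weight w" and "decreasing_pos w"
  shows "space_incl (lambda_norm w) (gamma_norm (dyadic_diff w) :: ('a::euclidean_space \<Rightarrow> real) \<Rightarrow> ennreal)"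
  by (rule space_inclI[where C = 1]) (simp add: gamma_norm_dyadic_le_lambda_norm[OF assms])

lemma space_incl_gamma_dyadic_L1_lambda:
  assumes wt: "weight w" and dec: "decreasing_pos w"
  shows "space_incl (\<lambda>f. gamma_norm (dyadic_diff w) f + L1_norm f)
    (lambda_norm w :: ('a::euclidean_space \<Rightarrow> real) \<Rightarrow> ennreal)"
proof (rule space_inclI[where C = "4 + winf w"])
  fix f :: "'a \<Rightarrow> real" assume f: "f \<in> borel_measurable lebesgue"
  have c: "0 \<le> winf w" by (rule winf_nonneg[OF wt dec])
  have "lambda_norm w f \<le> 4 * gamma_norm (dyadic_diff w) f + ennreal (winf w) * L1_norm f"
    by (rule lambda_norm_le_gamma_norm_dyadic[OF wt dec f])
  also have "\<dots> \<le> ennreal (4 + winf w) * gamma_norm (dyadic_diff w) f + ennreal (4 + winf w) * L1_norm f"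
    using c by (intro add_mono mult_right_mono) (simp_all add: ennreal_plus[symmetric])
  finally show "lambda_norm w f \<le> ennreal (4 + winf w) * (gamma_norm (dyadic_diff w) f + L1_norm f)"
    by (simp add: distrib_left)
qed

lemma space_incl_gamma_dyadic_lambda:
  assumes "weight w" and "decreasing_pos w" and "winf w = 0"
  shows "space_incl (gamma_norm (dyadic_diff w)) (lambda_norm w :: ('a::euclidean_space \<Rightarrow> real) \<Rightarrow> ennreal)"
  by (rule space_inclI[where C = 4])
    (use lambda_norm_le_gamma_norm_dyadic[OF assms(1,2)] assms(3) in simp)

lemma not_space_incl_gamma_L1:
  assumes "zero_ext v \<in> borel_measurable borel"
    and "gamma_norm v (cube_indicator 1 :: 'a::euclidean_space \<Rightarrow> real) < \<infinity>"
  shows "\<not> space_incl (gamma_norm v) (L1_norm :: ('a \<Rightarrow> real) \<Rightarrow> ennreal)"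
proof
  assume "space_incl (gamma_norm v) (L1_norm :: ('a \<Rightarrow> real) \<Rightarrow> ennreal)"
  then obtain C where C:
    "\<And>f. f \<in> borel_measurable lebesgue \<Longrightarrow> L1_norm (f :: 'a \<Rightarrow> real) \<le> ennreal C * gamma_norm v f"
    unfolding space_incl_def by blast
  obtain a where a: "0 < a" "ennreal C * gamma_norm v (cube_indicator a :: 'a \<Rightarrow> real) < ennreal a"
    using gamma_norm_cube_indicator_sublinear[OF assms] by blast
  have "ennreal a = L1_norm (cube_indicator a :: 'a \<Rightarrow> real)"
    using a(1) by (simp add: L1_norm_cube_indicator)
  also have "\<dots> \<le> ennreal C * gamma_norm v (cube_indicator a :: 'a \<Rightarrow> real)"
    by (rule C) simp
  finally show False using a(2) by simp
qed

lemma lambda_eq_gamma_iff: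
  assumes wt: "weight w" and dec: "decreasing_pos w"
  shows "(\<exists>v. weight v \<and> space_eq (lambda_norm w :: ('a::euclidean_space \<Rightarrow> real) \<Rightarrow> ennreal) (gamma_norm v))
    \<longleftrightarrow> winf w = 0"
proof
  assume "\<exists>v. weight v \<and> space_eq (lambda_norm w :: ('a \<Rightarrow> real) \<Rightarrow> ennreal) (gamma_norm v)"
  then obtain v where v: "weight v"
    and lambda_gamma: "space_incl (lambda_norm w) (gamma_norm v :: ('a \<Rightarrow> real) \<Rightarrow> ennreal)"
    and gamma_lambda: "space_incl (gamma_norm v) (lambda_norm w :: ('a \<Rightarrow> real) \<Rightarrow> ennreal)"
    unfolding space_eq_def by blast
  have "lambda_norm w (cube_indicator 1 :: 'a \<Rightarrow> real) < \<infinity>"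
    by (rule lambda_norm_cube_indicator_finite[OF wt]) simp
  then have "gamma_norm v (cube_indicator 1 :: 'a \<Rightarrow> real) < \<infinity>"
    by (rule space_incl_finite[OF lambda_gamma cube_indicator_measurable])
  then have "\<not> space_incl (gamma_norm v) (L1_norm :: ('a \<Rightarrow> real) \<Rightarrow> ennreal)"
    by (intro not_space_incl_gamma_L1 weight_zero_ext_measurable v)
  then have "\<not> space_incl (lambda_norm w) (L1_norm :: ('a \<Rightarrow> real) \<Rightarrow> ennreal)"
    using space_incl_trans[OF gamma_lambda] by blast
  then have "\<not> 0 < winf w"
    by (simp add: space_incl_lambda_L1_iff[OF wt dec])
  then show "winf w = 0"
    using winf_nonneg[OF wt dec] by simp
next
  assume "winf w = 0"
  then have "space_eq (lambda_norm w :: ('a \<Rightarrow> real) \<Rightarrow> ennreal) (gamma_norm (dyadic_diff w))"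
    unfolding space_eq_def
    using space_incl_lambda_gamma_dyadic[OF wt dec] space_incl_gamma_dyadic_lambda[OF wt dec] by simp
  then show "\<exists>v. weight v \<and> space_eq (lambda_norm w :: ('a \<Rightarrow> real) \<Rightarrow> ennreal) (gamma_norm v)"
    using weight_dyadic_diff[OF wt dec] by blast
qed

lemma lambda_eq_L1_iff:
  assumes "weight w" and "decreasing_pos w"
  shows "space_eq (lambda_norm w :: ('a::euclidean_space \<Rightarrow> real) \<Rightarrow> ennreal) L1_norm
    \<longleftrightarrow> 0 < winf w \<and> Linfty_pos w"
  unfolding space_eq_def space_incl_lambda_L1_iff[OF assms] space_incl_L1_lambda_iff[OF assms] ..

lemma lambda_eq_gamma_add_L1_imp_winf_pos_unbounded:
  assumes wt: "weight w" and dec: "decreasing_pos w"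
    and eq: "space_eq (lambda_norm w :: ('a::euclidean_space \<Rightarrow> real) \<Rightarrow> ennreal) (\<lambda>f. gamma_norm v f + L1_norm f)"
    and not_L1_gamma: "\<not> space_incl (L1_norm :: ('a \<Rightarrow> real) \<Rightarrow> ennreal) (gamma_norm v)"
  shows "0 < winf w \<and> \<not> Linfty_pos w"
proof -
  have lambda_sum: "space_incl (lambda_norm w) (\<lambda>f::'a \<Rightarrow> real. gamma_norm v f + L1_norm f)"
    and sum_lambda: "space_incl (\<lambda>f::'a \<Rightarrow> real. gamma_norm v f + L1_norm f) (lambda_norm w)"
    using eq unfolding space_eq_def by simp_all
  have "space_incl (lambda_norm w) (L1_norm :: ('a \<Rightarrow> real) \<Rightarrow> ennreal)"
    using lambda_sum space_incl_add_right by (rule space_incl_trans)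
  moreover have "\<not> space_incl (L1_norm :: ('a \<Rightarrow> real) \<Rightarrow> ennreal) (lambda_norm w)"
  proof
    assume "space_incl (L1_norm :: ('a \<Rightarrow> real) \<Rightarrow> ennreal) (lambda_norm w)"
    then have "space_incl (L1_norm :: ('a \<Rightarrow> real) \<Rightarrow> ennreal) (\<lambda>f. gamma_norm v f + L1_norm f)"
      using lambda_sum by (rule space_incl_trans)
    then have "space_incl (L1_norm :: ('a \<Rightarrow> real) \<Rightarrow> ennreal) (gamma_norm v)"
      using space_incl_add_left by (rule space_incl_trans)
    with not_L1_gamma show False ..
  qed
  ultimately show ?thesis
    unfolding space_incl_lambda_L1_iff[OF wt dec] space_incl_L1_lambda_iff[OF wt dec] ..
qed

lemma lambda_eq_gamma_dyadic_add_L1: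
  assumes wt: "weight w" and dec: "decreasing_pos w" and "0 < winf w" and "\<not> Linfty_pos w"
  shows "space_eq (lambda_norm w :: ('a::euclidean_space \<Rightarrow> real) \<Rightarrow> ennreal)
      (\<lambda>f. gamma_norm (dyadic_diff w) f + L1_norm f)"
    and "\<not> space_incl (L1_norm :: ('a \<Rightarrow> real) \<Rightarrow> ennreal) (gamma_norm (dyadic_diff w))"
    and "\<not> space_incl (gamma_norm (dyadic_diff w) :: ('a \<Rightarrow> real) \<Rightarrow> ennreal) L1_norm"
proof -
  have lambda_L1: "space_incl (lambda_norm w) (L1_norm :: ('a \<Rightarrow> real) \<Rightarrow> ennreal)"
    and not_L1_lambda: "\<not> space_incl (L1_norm :: ('a \<Rightarrow> real) \<Rightarrow> ennreal) (lambda_norm w)"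
    using assms(3,4) unfolding space_incl_lambda_L1_iff[OF wt dec] space_incl_L1_lambda_iff[OF wt dec] .
  have sum_lambda: "space_incl (\<lambda>f::'a \<Rightarrow> real. gamma_norm (dyadic_diff w) f + L1_norm f) (lambda_norm w)"
    by (rule space_incl_gamma_dyadic_L1_lambda[OF wt dec])
  moreover have "space_incl (lambda_norm w) (\<lambda>f::'a \<Rightarrow> real. gamma_norm (dyadic_diff w) f + L1_norm f)"
    using space_incl_lambda_gamma_dyadic[OF wt dec] lambda_L1 by (rule space_incl_add)
  ultimately show "space_eq (lambda_norm w :: ('a \<Rightarrow> real) \<Rightarrow> ennreal)
      (\<lambda>f. gamma_norm (dyadic_diff w) f + L1_norm f)"
    unfolding space_eq_def by simp
  show "\<not> space_incl (L1_norm :: ('a \<Rightarrow> real) \<Rightarrow> ennreal) (gamma_norm (dyadic_diff w))"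
  proof
    assume "space_incl (L1_norm :: ('a \<Rightarrow> real) \<Rightarrow> ennreal) (gamma_norm (dyadic_diff w))"
    then have "space_incl (L1_norm :: ('a \<Rightarrow> real) \<Rightarrow> ennreal) (\<lambda>f. gamma_norm (dyadic_diff w) f + L1_norm f)"
      using space_incl_refl by (rule space_incl_add)
    then have "space_incl (L1_norm :: ('a \<Rightarrow> real) \<Rightarrow> ennreal) (lambda_norm w)"
      using sum_lambda by (rule space_incl_trans)
    with not_L1_lambda show False ..
  qed
  show "\<not> space_incl (gamma_norm (dyadic_diff w) :: ('a \<Rightarrow> real) \<Rightarrow> ennreal) L1_norm"
  proof (rule not_space_incl_gamma_L1)
    show "zero_ext (dyadic_diff w) \<in> borel_measurable borel"
      by (intro weight_zero_ext_measurable weight_dyadic_diff wt dec)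
    have "gamma_norm (dyadic_diff w) (cube_indicator 1 :: 'a \<Rightarrow> real) \<le> lambda_norm w (cube_indicator 1 :: 'a \<Rightarrow> real)"
      by (rule gamma_norm_dyadic_le_lambda_norm[OF wt dec])
    also have "\<dots> < \<infinity>"
      by (rule lambda_norm_cube_indicator_finite[OF wt]) simp
    finally show "gamma_norm (dyadic_diff w) (cube_indicator 1 :: 'a \<Rightarrow> real) < \<infinity>" .
  qed
qed

lemma lambda_eq_gamma_add_L1_iff:
  assumes wt: "weight w" and dec: "decreasing_pos w"
  shows "(\<exists>v. weight v
      \<and> space_eq (lambda_norm w :: ('a::euclidean_space \<Rightarrow> real) \<Rightarrow> ennreal) (\<lambda>f. gamma_norm v f + L1_norm f)
      \<and> \<not> space_incl (L1_norm :: ('a \<Rightarrow> real) \<Rightarrow> ennreal) (gamma_norm v)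
      \<and> \<not> space_incl (gamma_norm v :: ('a \<Rightarrow> real) \<Rightarrow> ennreal) L1_norm)
    \<longleftrightarrow> 0 < winf w \<and> \<not> Linfty_pos w"
  using lambda_eq_gamma_add_L1_imp_winf_pos_unbounded[OF wt dec] lambda_eq_gamma_dyadic_add_L1[OF wt dec]
    weight_dyadic_diff[OF wt dec]
  by blast

theorem theorem3p1:
  fixes w :: "real \<Rightarrow> real"
  assumes "weight w" and "decreasing_pos w"
  shows "((\<exists>v. weight v \<and>
            space_eq (lambda_norm w :: ('n::euclidean_space \<Rightarrow> real) \<Rightarrow> ennreal) (gamma_norm v))
           \<longleftrightarrow> winf w = 0)
       \<and> (space_eq (lambda_norm w :: ('n \<Rightarrow> real) \<Rightarrow> ennreal) L1_norm
           \<longleftrightarrow> winf w > 0 \<and> Linfty_pos w)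
       \<and> ((\<exists>v. weight v \<and>
            space_eq (lambda_norm w :: ('n \<Rightarrow> real) \<Rightarrow> ennreal) (\<lambda>f. gamma_norm v f + L1_norm f)
            \<and> \<not> space_incl (L1_norm :: ('n \<Rightarrow> real) \<Rightarrow> ennreal) (gamma_norm v)
            \<and> \<not> space_incl (gamma_norm v :: ('n \<Rightarrow> real) \<Rightarrow> ennreal) L1_norm)
           \<longleftrightarrow> winf w > 0 \<and> \<not> Linfty_pos w)"
  using lambda_eq_gamma_iff[OF assms] lambda_eq_L1_iff[OF assms] lambda_eq_gamma_add_L1_iff[OF assms]
  by blast

end
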